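(* Let $f,g:\mathbb{R}^n\to\mathbb{R}$ be convex functions, and suppose $\nabla f$ exists and is Lipschitz continuous with constant $L(f)>0$. Let $F=f+g$ and let $x^*$ be an optimal solution of $\min_x F(x)$. Fix $0<\beta\le 1$ and $\mu$ with $\beta/L(f)\le\mu\le 1/L(f)$. Run the following algorithm (Alternating linearization method with skipping step) from $x^0=y^0\in\mathbb{R}^n$ and $\lambda^0$ with $-\lambda^0\in\partial g(y^0)$: for $k=0,1,2,\dots$, 1. $x^{k+1}:=\arg\min_x Q(x,y^k)$, where $Q(x,y^k):=f(x)+g(y^k)-\langle\lambda^k,x-y^k\rangle+\frac{1}{2\mu}\|x-y^k\|_2^2$; 2. if $F(x^{k+1})>Q(x^{k+1},y^k)$, then reset $x^{k+1}:=y^k$; 3. $y^{k+1}:=\arg\min_y Q_f(x^{k+1},y)$, where $Q_f(x,y):=f(x)+\langle\nabla f(x),y-x\rangle+\frac{1}{2\mu}\|y-x\|_2^2+g(y)$; 4. $\lambda^{k+1}:=\nabla f(x^{k+1})-(x^{k+1}-y^{k+1})/\mu$. For $k\ge 1$ let $k_n$ denote the number of iterations among the first $k$ iterations (indices $0,\dots,k-1$) in which the inequality $F(x^{j+1})\le Q(x^{j+1},y^j)$ held in step 2 (i.e., no reset occurred). Then for every $k\ge1$, $$F(y^k)-F(x^* )\le\frac{\|x^0-x^*\|^2}{2\mu(k+k_n)}.$$ Consequently $F(y^k)\to F(x^* )$, and the number of iterations needed to obtain $F(y^k)-F(x^* )\le\epsilon$ is $O(1/\epsilon)$ (specifically, it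 suffices that $k\ge \frac{L(f)\|x^0-x^*\|^2}{2\beta\epsilon}$).
   Context: $\partial g(y)$ denotes the subdifferential of the convex function $g$ at $y$. All norms are Euclidean norms. *)

theory Defs
  imports "HOL-Analysis.Analysis"
begin

definition subdifferential :: "('a::real_inner \<Rightarrow> real) \<Rightarrow> 'a \<Rightarrow> 'a set" where
  "subdifferential g y = {s. \<forall>z. g z \<ge> g y + s \<bullet> (z - y)}"

definition alm_Q :: "('a::real_inner \<Rightarrow> real) \<Rightarrow> ('a \<Rightarrow> real) \<Rightarrow> real \<Rightarrow> 'a \<Rightarrow> 'a \<Rightarrow> 'a \<Rightarrow> real" where
  "alm_Q f g \<mu> lam x y = f x + g y - lam \<bullet> (x - y) + (1 / (2 * \<mu>)) * (norm (x - y))\<^sup>2"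

definition alm_Qf :: "('a::real_inner \<Rightarrow> real) \<Rightarrow> ('a \<Rightarrow> 'a) \<Rightarrow> ('a \<Rightarrow> real) \<Rightarrow> real \<Rightarrow> 'a \<Rightarrow> 'a \<Rightarrow> real" where
  "alm_Qf f gf g \<mu> x y = f x + gf x \<bullet> (y - x) + (1 / (2 * \<mu>)) * (norm (y - x))\<^sup>2 + g y"

end

theory Submission
  imports Defs
begin

text \<open>Both steps of the method are proximal steps on convex models of \<open>F = f + g\<close>, and each
  yields a three-point inequality \<open>2 \<mu> (F z - F p) \<ge> \<parallel>p - z\<parallel>\<^sup>2 - \<parallel>q - z\<parallel>\<^sup>2\<close> from its
  input \<open>q\<close> to its output \<open>p\<close>: for the \<open>y\<close>-step because \<open>\<mu> \<le> 1/L\<close> makes the linearized model an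
  upper bound of \<open>f\<close>, for an accepted \<open>x\<close>-step because of the test in step 2; that \<open>-\<lambda>\<^sup>k\<close> is a
  subgradient of \<open>g\<close> at \<open>y\<^sup>k\<close> is the optimality condition of the previous \<open>y\<close>-step.
  Taking \<open>z = x\<^sup>*\<close> and telescoping over the first \<open>k\<close> iterations bounds the sum of the
  \<open>k + k\<^sub>n\<close> gaps of the iterates by \<open>\<parallel>x\<^sup>0 - x\<^sup>*\<parallel>\<^sup>2 / (2 \<mu>)\<close>; taking \<open>z\<close> to be the
  input shows that \<open>F\<close> decreases along the iterates, so every one of these gaps is at least
  \<open>F (y\<^sup>k) - F (x\<^sup>*)\<close>.\<close>

lemma has_real_derivative_along_line:
  fixes f :: "'a::real_inner \<Rightarrow> real"
  assumes "\<And>x. (f has_derivative (\<lambda>h. gf x \<bullet> h)) (at x)"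
  shows "((\<lambda>t. f (x + t *\<^sub>R d)) has_real_derivative (gf (x + t *\<^sub>R d) \<bullet> d)) (at t)"
proof -
  have "((\<lambda>t. x + t *\<^sub>R d) has_derivative (\<lambda>h. h *\<^sub>R d)) (at t)"
    by (auto intro!: derivative_eq_intros)
  from has_derivative_compose[OF this assms]
  have "((\<lambda>t. f (x + t *\<^sub>R d)) has_derivative (\<lambda>h. gf (x + t *\<^sub>R d) \<bullet> (h *\<^sub>R d))) (at t)"
    by (simp add: o_def)
  moreover have "(\<lambda>h. gf (x + t *\<^sub>R d) \<bullet> (h *\<^sub>R d)) = (*) (gf (x + t *\<^sub>R d) \<bullet> d)"
    by (auto simp: mult.commute)
  ultimately show ?thesis
    by (simp add: has_field_derivative_def)
qed

lemma convex_on_gradient_inequality: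
  fixes f :: "'a::real_inner \<Rightarrow> real"
  assumes cvx: "convex_on UNIV f" and grad: "\<And>x. (f has_derivative (\<lambda>h. gf x \<bullet> h)) (at x)"
  shows "f x + gf x \<bullet> (z - x) \<le> f z"
proof -
  let ?p = "\<lambda>t. f (x + t *\<^sub>R (z - x))"
  have "convex_on UNIV ?p"
  proof (rule convex_onI)
    fix t u s :: real assume "0 < t" "t < 1"
    have "x + ((1 - t) *\<^sub>R u + t *\<^sub>R s) *\<^sub>R (z - x)
        = (1 - t) *\<^sub>R (x + u *\<^sub>R (z - x)) + t *\<^sub>R (x + s *\<^sub>R (z - x))"
      by (simp add: algebra_simps)
    then show "?p ((1 - t) *\<^sub>R u + t *\<^sub>R s) \<le> (1 - t) * ?p u + t * ?p s"
      using convex_onD[OF cvx, of t "x + u *\<^sub>R (z - x)" "x + s *\<^sub>R (z - x)"] \<open>0 < t\<close> \<open>t < 1\<close>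
      by simp
  qed simp
  moreover have "(?p has_field_derivative (gf x \<bullet> (z - x))) (at 0 within UNIV)"
    using has_real_derivative_along_line[OF grad, of x "z - x" 0] by simp
  ultimately have "?p 1 - ?p 0 \<ge> (gf x \<bullet> (z - x)) * (1 - 0)"
    by (intro convex_on_imp_above_tangent[where A = UNIV]) auto
  then show ?thesis
    by simp
qed

lemma lipschitz_gradient_upper_bound:
  fixes f :: "'a::real_inner \<Rightarrow> real"
  assumes grad: "\<And>x. (f has_derivative (\<lambda>h. gf x \<bullet> h)) (at x)"
    and lip: "L-lipschitz_on UNIV gf"
  shows "f y \<le> f x + gf x \<bullet> (y - x) + L / 2 * (norm (y - x))\<^sup>2"
proof -
  let ?d = "y - x"
  let ?p = "\<lambda>t. f (x + t *\<^sub>R ?d) - t * (gf x \<bullet> ?d) - L / 2 * t^2 * (norm ?d)\<^sup>2"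
  let ?p' = "\<lambda>t. (gf (x + t *\<^sub>R ?d) - gf x) \<bullet> ?d - L * t * (norm ?d)\<^sup>2"
  have deriv: "(?p has_real_derivative ?p' t) (at t)" for t
    by (rule derivative_eq_intros has_real_derivative_along_line[OF grad] refl)+
       (simp add: algebra_simps power2_eq_square inner_diff_left)
  have nonpos: "?p' t \<le> 0" if "0 \<le> t" for t
  proof -
    have "(gf (x + t *\<^sub>R ?d) - gf x) \<bullet> ?d \<le> norm (gf (x + t *\<^sub>R ?d) - gf x) * norm ?d"
      by (rule order_trans[OF _ Cauchy_Schwarz_ineq2]) simp
    also have "\<dots> \<le> L * (t * norm ?d) * norm ?d"
      using lipschitz_onD[OF lip, of "x + t *\<^sub>R ?d" x] that
      by (intro mult_right_mono) (simp_all add: dist_norm)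
    finally show ?thesis
      by (simp add: power2_eq_square algebra_simps)
  qed
  have "?p 1 \<le> ?p 0"
  proof (rule DERIV_nonpos_imp_nonincreasing[of 0 1])
    fix t :: real assume "0 \<le> t"
    then show "\<exists>D. (?p has_real_derivative D) (at t) \<and> D \<le> 0"
      using deriv nonpos by blast
  qed simp
  then show ?thesis
    by simp
qed

lemma power2_norm_add_scaleR:
  fixes u v :: "'a::real_inner"
  shows "(norm (u + t *\<^sub>R v))\<^sup>2 = (norm u)\<^sup>2 + 2 * t * (u \<bullet> v) + t\<^sup>2 * (norm v)\<^sup>2"
  by (simp only: power2_norm_eq_inner inner_add_left inner_add_right inner_scaleR_left
      inner_scaleR_right inner_commute[of v u])
     (simp add: power2_eq_square algebra_simps)

lemma nonpos_if_le_scaled: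
  fixes E M :: real
  assumes "\<And>t. 0 < t \<Longrightarrow> t \<le> 1 \<Longrightarrow> E \<le> t * M"
  shows "E \<le> 0"
proof -
  have "((\<lambda>t. t * M) \<longlongrightarrow> 0 * M) (at_right 0)"
    by (intro tendsto_intros)
  moreover have "\<forall>\<^sub>F t in at_right 0. t \<in> {0<..<1::real}"
    by (rule eventually_at_right_real) simp
  then have "\<forall>\<^sub>F t in at_right 0. E \<le> t * M"
    by eventually_elim (auto intro: assms)
  ultimately show ?thesis
    by (intro tendsto_lowerbound) auto
qed

lemma proximal_minimizer_subgradient:
  fixes h :: "'a::real_inner \<Rightarrow> real"
  assumes cvx: "convex_on UNIV h" and c: "0 \<le> c"
    and opt: "\<And>z. h x + a \<bullet> x + c * (norm (x - b))\<^sup>2 \<le> h z + a \<bullet> z + c * (norm (z - b))\<^sup>2"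
  shows "- (a + (2 * c) *\<^sub>R (x - b)) \<in> subdifferential h x"
  unfolding subdifferential_def
proof (intro CollectI allI)
  fix z
  define E where "E = h x - h z - a \<bullet> (z - x) - 2 * c * ((x - b) \<bullet> (z - x))"
  have "E \<le> t * (c * (norm (z - x))\<^sup>2)" if t: "0 < t" "t \<le> 1" for t
  proof -
    define w where "w = x + t *\<^sub>R (z - x)"
    have hw: "h w \<le> (1 - t) * h x + t * h z"
    proof (cases "t = 1")
      case False
      have "w = (1 - t) *\<^sub>R x + t *\<^sub>R z"
        by (simp add: w_def algebra_simps)
      then show ?thesis
        using convex_onD[OF cvx, of t x z] t False by simp
    qed (simp add: w_def)
    have "w - b = (x - b) + t *\<^sub>R (z - x)"
      by (simp add: w_def algebra_simps)
    then have nw: "(norm (w - b))\<^sup>2 = (norm (x - b))\<^sup>2 + 2 * t * ((x - b) \<bullet> (z - x)) + t\<^sup>2 * (norm (z - x))\<^sup>2"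
      by (simp only: power2_norm_add_scaleR)
    have "c * (norm (w - b))\<^sup>2 = c * (norm (x - b))\<^sup>2
        + t * (2 * c * ((x - b) \<bullet> (z - x))) + t * (t * (c * (norm (z - x))\<^sup>2))"
      unfolding nw by (simp add: distrib_left power2_eq_square ac_simps)
    moreover have "a \<bullet> w = a \<bullet> x + t * (a \<bullet> (z - x))"
      by (simp add: w_def inner_add_right)
    ultimately have "t * E \<le> t * (t * (c * (norm (z - x))\<^sup>2))"
      using opt[of w] hw by (simp add: E_def algebra_simps)
    with t show ?thesis
      by simp
  qed
  then have "E \<le> 0"
    by (rule nonpos_if_le_scaled)
  then show "h z \<ge> h x + - (a + (2 * c) *\<^sub>R (x - b)) \<bullet> (z - x)"
    by (simp add: E_def inner_add_left algebra_simps)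
qed

lemma three_point_inequality:
  fixes X Y z :: "'a::real_inner"
  assumes "0 < \<mu>"
    and "(1 / \<mu>) * ((X - Y) \<bullet> (z - Y)) - (1 / (2 * \<mu>)) * (norm (X - Y))\<^sup>2 \<le> d"
  shows "(norm (Y - z))\<^sup>2 - (norm (X - z))\<^sup>2 \<le> 2 * \<mu> * d"
proof -
  have "X - z = (X - Y) + (-1) *\<^sub>R (z - Y)"
    by (simp add: algebra_simps)
  then have "(norm (X - z))\<^sup>2 = (norm (X - Y))\<^sup>2 - 2 * ((X - Y) \<bullet> (z - Y)) + (norm (z - Y))\<^sup>2"
    using power2_norm_add_scaleR[of "X - Y" "-1" "z - Y"] by simp
  then have "(norm (Y - z))\<^sup>2 - (norm (X - z))\<^sup>2 = 2 * ((X - Y) \<bullet> (z - Y)) - (norm (X - Y))\<^sup>2"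
    by (simp add: norm_minus_commute[of z Y])
  also have "\<dots> = 2 * \<mu> * ((1 / \<mu>) * ((X - Y) \<bullet> (z - Y)) - (1 / (2 * \<mu>)) * (norm (X - Y))\<^sup>2)"
    using \<open>0 < \<mu>\<close> by (simp add: field_simps)
  also have "\<dots> \<le> 2 * \<mu> * d"
    using assms by (intro mult_left_mono) auto
  finally show ?thesis .
qed

locale alm_skipping =
  fixes f g :: "'a::real_inner \<Rightarrow> real"
    and gf :: "'a \<Rightarrow> 'a"
    and L \<mu> :: real
    and xt xs ys lam :: "nat \<Rightarrow> 'a"
  assumes f_convex: "convex_on UNIV f"
    and g_convex: "convex_on UNIV g"
    and f_grad: "\<And>x. (f has_derivative (\<lambda>h. gf x \<bullet> h)) (at x)"
    and grad_lip: "L-lipschitz_on UNIV gf"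
    and mu_pos: "0 < \<mu>"
    and mu_L: "\<mu> * L \<le> 1"
    and lam0: "- lam 0 \<in> subdifferential g (ys 0)"
    and step1: "\<And>k x. alm_Q f g \<mu> (lam k) (xt (Suc k)) (ys k) \<le> alm_Q f g \<mu> (lam k) x (ys k)"
    and step2: "\<And>k. xs (Suc k) =
        (if f (xt (Suc k)) + g (xt (Suc k)) > alm_Q f g \<mu> (lam k) (xt (Suc k)) (ys k)
         then ys k else xt (Suc k))"
    and step3: "\<And>k y. alm_Qf f gf g \<mu> (xs (Suc k)) (ys (Suc k)) \<le> alm_Qf f gf g \<mu> (xs (Suc k)) y"
    and step4: "\<And>k. lam (Suc k) = gf (xs (Suc k)) - (1 / \<mu>) *\<^sub>R (xs (Suc k) - ys (Suc k))"
begin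

abbreviation F :: "'a \<Rightarrow> real" where
  "F x \<equiv> f x + g x"

abbreviation no_reset :: "nat \<Rightarrow> bool" where
  "no_reset k \<equiv> F (xt (Suc k)) \<le> alm_Q f g \<mu> (lam k) (xt (Suc k)) (ys k)"

lemma xs_Suc_no_reset: "no_reset k \<Longrightarrow> xs (Suc k) = xt (Suc k)"
  using step2[of k] by simp

lemma xs_Suc_reset: "\<not> no_reset k \<Longrightarrow> xs (Suc k) = ys k"
  using step2[of k] by simp

lemma neg_lam_subgradient: "- lam k \<in> subdifferential g (ys k)"
proof (cases k)
  case (Suc m)
  let ?X = "xs (Suc m)" and ?Y = "ys (Suc m)"
  have opt: "g ?Y + gf ?X \<bullet> ?Y + (1 / (2 * \<mu>)) * (norm (?Y - ?X))\<^sup>2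
      \<le> g w + gf ?X \<bullet> w + (1 / (2 * \<mu>)) * (norm (w - ?X))\<^sup>2" for w
    using step3[of m w] by (simp add: alm_Qf_def inner_diff_right)
  have "- (gf ?X + (2 * (1 / (2 * \<mu>))) *\<^sub>R (?Y - ?X)) \<in> subdifferential g ?Y"
    by (rule proximal_minimizer_subgradient[OF g_convex _ opt]) (use mu_pos in simp)
  moreover have "gf ?X + (2 * (1 / (2 * \<mu>))) *\<^sub>R (?Y - ?X) = lam (Suc m)"
    using step4[of m] by (simp add: algebra_simps)
  ultimately have "- lam (Suc m) \<in> subdifferential g ?Y"
    by (simp only:)
  then show ?thesis
    using Suc by simp
qed (use lam0 in simp)

text \<open>The descent lemma for \<open>f\<close> replaces \<open>L\<close> by \<open>1 / \<mu>\<close>, so \<open>F (ys (Suc k))\<close> is bounded by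
  the model \<open>alm_Qf\<close> at \<open>xs (Suc k)\<close>, which in turn is below \<open>F z\<close> up to the proximal term.\<close>
lemma ys_step_bound:
  "(norm (ys (Suc k) - z))\<^sup>2 - (norm (xs (Suc k) - z))\<^sup>2 \<le> 2 * \<mu> * (F z - F (ys (Suc k)))"
proof (rule three_point_inequality[OF mu_pos])
  define X where "X = xs (Suc k)"
  define Y where "Y = ys (Suc k)"
  have f_z: "f X + gf X \<bullet> (z - X) \<le> f z"
    by (rule convex_on_gradient_inequality[OF f_convex f_grad])
  have g_z: "g Y + (- lam (Suc k)) \<bullet> (z - Y) \<le> g z"
    using neg_lam_subgradient[of "Suc k"] by (simp add: subdifferential_def Y_def)
  have "L / 2 * (norm (Y - X))\<^sup>2 \<le> (1 / (2 * \<mu>)) * (norm (Y - X))\<^sup>2"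
    using mu_L mu_pos by (intro mult_right_mono) (auto simp: field_simps)
  then have f_Y: "f Y \<le> f X + gf X \<bullet> (Y - X) + (1 / (2 * \<mu>)) * (norm (X - Y))\<^sup>2"
    using lipschitz_gradient_upper_bound[OF f_grad grad_lip, of Y X]
    by (simp add: norm_minus_commute)
  have "lam (Suc k) \<bullet> (z - Y) = gf X \<bullet> (z - Y) - (1 / \<mu>) * ((X - Y) \<bullet> (z - Y))"
    using step4[of k] by (simp add: X_def Y_def inner_diff_left)
  moreover have "gf X \<bullet> (z - X) - gf X \<bullet> (Y - X) = gf X \<bullet> (z - Y)"
    by (simp add: inner_diff_right)
  ultimately show "(1 / \<mu>) * ((X - Y) \<bullet> (z - Y)) - (1 / (2 * \<mu>)) * (norm (X - Y))\<^sup>2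
      \<le> F z - F Y"
    using f_z g_z f_Y by simp
qed

text \<open>The test in step 2 is exactly what is needed to bound \<open>F (xt (Suc k))\<close> by the model \<open>alm_Q\<close>.\<close>
lemma xs_step_bound:
  assumes "no_reset k"
  shows "(norm (xs (Suc k) - z))\<^sup>2 - (norm (ys k - z))\<^sup>2 \<le> 2 * \<mu> * (F z - F (xs (Suc k)))"
  unfolding xs_Suc_no_reset[OF assms]
proof (rule three_point_inequality[OF mu_pos])
  define X where "X = xt (Suc k)"
  define Y where "Y = ys k"
  let ?c = "1 / (2 * \<mu>)"
  have opt: "f X + (- lam k) \<bullet> X + ?c * (norm (X - Y))\<^sup>2
      \<le> f w + (- lam k) \<bullet> w + ?c * (norm (w - Y))\<^sup>2" for w
    using step1[of k w] by (simp add: alm_Q_def inner_diff_right X_def Y_def)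
  have "- ((- lam k) + (2 * ?c) *\<^sub>R (X - Y)) \<in> subdifferential f X"
    by (rule proximal_minimizer_subgradient[OF f_convex _ opt]) (use mu_pos in simp)
  then have f_z: "f X + lam k \<bullet> (z - X) + (1 / \<mu>) * ((Y - X) \<bullet> (z - X)) \<le> f z"
    by (simp add: subdifferential_def inner_add_left algebra_simps inner_diff_left)
  have g_z: "g Y - lam k \<bullet> (z - Y) \<le> g z"
    using neg_lam_subgradient[of k] by (simp add: subdifferential_def Y_def)
  have F_X: "F X \<le> f X + g Y - lam k \<bullet> (X - Y) + ?c * (norm (Y - X))\<^sup>2"
    using assms by (simp add: alm_Q_def X_def Y_def norm_minus_commute)
  have "lam k \<bullet> (z - X) - lam k \<bullet> (z - Y) + lam k \<bullet> (X - Y) = 0"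
    by (simp add: inner_diff_right)
  then show "(1 / \<mu>) * ((Y - X) \<bullet> (z - X)) - ?c * (norm (Y - X))\<^sup>2 \<le> F z - F X"
    using f_z g_z F_X by simp
qed

lemma F_ys_Suc_le_F_xs_Suc: "F (ys (Suc k)) \<le> F (xs (Suc k))"
proof -
  have "(norm (ys (Suc k) - xs (Suc k)))\<^sup>2 \<le> 2 * \<mu> * (F (xs (Suc k)) - F (ys (Suc k)))"
    using ys_step_bound[of k "xs (Suc k)"] by simp
  then have "0 \<le> 2 * \<mu> * (F (xs (Suc k)) - F (ys (Suc k)))"
    by (rule order_trans[OF zero_le_power2])
  with mu_pos show ?thesis
    by (simp add: zero_le_mult_iff)
qed

lemma F_xs_Suc_le_F_ys: "F (xs (Suc k)) \<le> F (ys k)"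
proof (cases "no_reset k")
  case True
  have "(norm (xs (Suc k) - ys k))\<^sup>2 \<le> 2 * \<mu> * (F (ys k) - F (xs (Suc k)))"
    using xs_step_bound[OF True, of "ys k"] by simp
  then have "0 \<le> 2 * \<mu> * (F (ys k) - F (xs (Suc k)))"
    by (rule order_trans[OF zero_le_power2])
  with mu_pos show ?thesis
    by (simp add: zero_le_mult_iff)
qed (simp add: xs_Suc_reset)

lemma decseq_F_ys: "decseq (\<lambda>k. F (ys k))"
  using F_ys_Suc_le_F_xs_Suc F_xs_Suc_le_F_ys order_trans by (blast intro: decseq_SucI)

text \<open>Every non-reset iteration contributes the gap of \<open>xs (Suc k)\<close> as well as that of
  \<open>ys (Suc k)\<close>; this is where the \<open>k_n\<close> in the rate comes from.\<close>
lemma iteration_gap_bound: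
  "2 * \<mu> * ((F (ys (Suc k)) - F z) + (if no_reset k then F (xs (Suc k)) - F z else 0))
    \<le> (norm (ys k - z))\<^sup>2 - (norm (ys (Suc k) - z))\<^sup>2"
  using ys_step_bound[of k z] xs_step_bound[of k z] xs_Suc_reset[of k]
  by (cases "no_reset k") (simp_all add: algebra_simps)

lemma F_ys_gap_bound:
  assumes "1 \<le> k"
  shows "F (ys k) - F z \<le> (norm (ys 0 - z))\<^sup>2 / (2 * \<mu> * (real k + real (card {j. j < k \<and> no_reset j})))"
proof -
  define D where "D = F (ys k) - F z"
  define T where "T j = (F (ys (Suc j)) - F z) + (if no_reset j then F (xs (Suc j)) - F z else 0)" for j
  have "2 * \<mu> * (\<Sum>j<k. T j) = (\<Sum>j<k. 2 * \<mu> * T j)"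
    by (simp add: sum_distrib_left)
  also have "\<dots> \<le> (\<Sum>j<k. (norm (ys j - z))\<^sup>2 - (norm (ys (Suc j) - z))\<^sup>2)"
    unfolding T_def by (intro sum_mono iteration_gap_bound)
  also have "\<dots> = (norm (ys 0 - z))\<^sup>2 - (norm (ys k - z))\<^sup>2"
    by (rule sum_lessThan_telescope')
  also have "\<dots> \<le> (norm (ys 0 - z))\<^sup>2"
    by simp
  finally have sum_T: "2 * \<mu> * (\<Sum>j<k. T j) \<le> (norm (ys 0 - z))\<^sup>2" .
  have "D * (1 + (if no_reset j then 1 else 0)) \<le> T j" if "j < k" for j
  proof -
    have "F (ys k) \<le> F (ys (Suc j))"
      using decseq_F_ys that by (simp add: decseq_def)
    then show ?thesis
      using F_ys_Suc_le_F_xs_Suc[of j] by (auto simp: T_def D_def)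
  qed
  then have "(\<Sum>j<k. D * (1 + (if no_reset j then 1 else 0))) \<le> (\<Sum>j<k. T j)"
    by (intro sum_mono) auto
  moreover have "(\<Sum>j<k. (1 + (if no_reset j then 1 else 0)) :: real)
      = real k + real (card {j. j < k \<and> no_reset j})"
    by (simp add: sum.distrib sum.If_cases lessThan_def Collect_conj_eq Int_commute)
  ultimately have "D * (real k + real (card {j. j < k \<and> no_reset j})) \<le> (\<Sum>j<k. T j)"
    by (simp add: sum_distrib_left[symmetric])
  then have "2 * \<mu> * (D * (real k + real (card {j. j < k \<and> no_reset j}))) \<le> 2 * \<mu> * (\<Sum>j<k. T j)"
    using mu_pos by (intro mult_left_mono) auto
  with sum_T have "2 * \<mu> * (D * (real k + real (card {j. j < k \<and> no_reset j}))) \<le> (norm (ys 0 - z))\<^sup>2"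
    by linarith
  moreover have "0 < 2 * \<mu> * (real k + real (card {j. j < k \<and> no_reset j}))"
    using mu_pos assms by simp
  ultimately show ?thesis
    by (simp add: D_def pos_le_divide_eq mult.commute mult.left_commute)
qed

lemma F_ys_gap_le_inverse:
  assumes "1 \<le> k"
  shows "F (ys k) - F z \<le> (norm (ys 0 - z))\<^sup>2 / (2 * \<mu> * real k)"
proof -
  have "(norm (ys 0 - z))\<^sup>2 / (2 * \<mu> * (real k + real (card {j. j < k \<and> no_reset j})))
      \<le> (norm (ys 0 - z))\<^sup>2 / (2 * \<mu> * real k)"
    using mu_pos assms by (intro divide_left_mono mult_pos_pos) auto
  with F_ys_gap_bound[OF assms, of z] show ?thesis
    by linarith
qed

lemma F_ys_gap_le_if_iterations_ge:
  assumes "1 \<le> k" "0 < \<epsilon>" "(norm (ys 0 - z))\<^sup>2 / (2 * \<mu> * \<epsilon>) \<le> real k"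
  shows "F (ys k) - F z \<le> \<epsilon>"
proof -
  have "(norm (ys 0 - z))\<^sup>2 \<le> \<epsilon> * (2 * \<mu> * real k)"
    using assms mu_pos by (simp add: pos_divide_le_eq ac_simps)
  then have "(norm (ys 0 - z))\<^sup>2 / (2 * \<mu> * real k) \<le> \<epsilon>"
    using assms mu_pos by (simp add: pos_divide_le_eq)
  with F_ys_gap_le_inverse[OF assms(1), of z] show ?thesis
    by linarith
qed

lemma F_ys_tendsto_min:
  assumes min: "\<And>x. F z \<le> F x"
  shows "(\<lambda>k. F (ys k)) \<longlonglongrightarrow> F z"
proof -
  have "(\<lambda>k. F (ys k) - F z) \<longlonglongrightarrow> 0"
  proof (rule tendsto_sandwich[OF _ _ tendsto_const lim_const_over_n])
    show "\<forall>\<^sub>F k in sequentially. 0 \<le> F (ys k) - F z"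
      using min by simp
    show "\<forall>\<^sub>F k in sequentially. F (ys k) - F z \<le> (norm (ys 0 - z))\<^sup>2 / (2 * \<mu>) / real k"
      using eventually_ge_at_top[of 1] by eventually_elim (use F_ys_gap_le_inverse in simp)
  qed
  then show ?thesis
    by (simp add: LIM_zero_iff)
qed

end

theorem theorem1:
  fixes f g :: "'a::euclidean_space \<Rightarrow> real"
    and gf :: "'a \<Rightarrow> 'a"
    and L \<beta> \<mu> :: real
    and xstar x0 :: 'a
    and xt xs ys lam :: "nat \<Rightarrow> 'a"
  assumes f_convex: "convex_on UNIV f"
    and g_convex: "convex_on UNIV g"
    and f_grad: "\<And>x. (f has_derivative (\<lambda>h. gf x \<bullet> h)) (at x)"
    and L_pos: "L > 0"
    and grad_lip: "L-lipschitz_on UNIV gf"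
    and xstar_opt: "\<And>x. f xstar + g xstar \<le> f x + g x"
    and beta: "0 < \<beta>" "\<beta> \<le> 1"
    and mu: "\<beta> / L \<le> \<mu>" "\<mu> \<le> 1 / L"
    and init: "xs 0 = x0" "ys 0 = x0"
    and lam0: "- lam 0 \<in> subdifferential g (ys 0)"
    and step1: "\<And>k x. alm_Q f g \<mu> (lam k) (xt (Suc k)) (ys k) \<le> alm_Q f g \<mu> (lam k) x (ys k)"
    and step2: "\<And>k. xs (Suc k) =
        (if f (xt (Suc k)) + g (xt (Suc k)) > alm_Q f g \<mu> (lam k) (xt (Suc k)) (ys k)
         then ys k else xt (Suc k))"
    and step3: "\<And>k y. alm_Qf f gf g \<mu> (xs (Suc k)) (ys (Suc k)) \<le> alm_Qf f gf g \<mu> (xs (Suc k)) y"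
    and step4: "\<And>k. lam (Suc k) = gf (xs (Suc k)) - (1 / \<mu>) *\<^sub>R (xs (Suc k) - ys (Suc k))"
  shows "(\<forall>k\<ge>1. f (ys k) + g (ys k) - (f xstar + g xstar)
            \<le> (norm (x0 - xstar))\<^sup>2 /
               (2 * \<mu> * (real k + real (card {j. j < k \<and>
                  f (xt (Suc j)) + g (xt (Suc j)) \<le> alm_Q f g \<mu> (lam j) (xt (Suc j)) (ys j)}))))
       \<and> ((\<lambda>k. f (ys k) + g (ys k)) \<longlonglongrightarrow> f xstar + g xstar)
       \<and> (\<forall>\<epsilon>>0. \<forall>k\<ge>1. real k \<ge> L * (norm (x0 - xstar))\<^sup>2 / (2 * \<beta> * \<epsilon>)
            \<longrightarrow> f (ys k) + g (ys k) - (f xstar + g xstar) \<le> \<epsilon>)"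
proof -
  have mu_pos: "0 < \<mu>"
    using beta L_pos mu(1) by (smt (verit) divide_pos_pos)
  have beta_le: "\<beta> \<le> \<mu> * L"
    using mu(1) L_pos by (simp add: pos_divide_le_eq)
  have mu_L: "\<mu> * L \<le> 1"
    using mu(2) L_pos by (simp add: pos_le_divide_eq)
  interpret alm: alm_skipping f g gf L \<mu> xt xs ys lam
    by unfold_locales (fact f_convex g_convex f_grad grad_lip mu_pos mu_L lam0 step1 step2 step3 step4)+
  have "(norm (x0 - xstar))\<^sup>2 / (2 * \<mu> * \<epsilon>) \<le> L * (norm (x0 - xstar))\<^sup>2 / (2 * \<beta> * \<epsilon>)"
    if "0 < \<epsilon>" for \<epsilon>
  proof -
    have "1 / \<mu> \<le> L / \<beta>"
      using beta_le beta mu_pos by (simp add: field_simps)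
    then have "(norm (x0 - xstar))\<^sup>2 / (2 * \<epsilon>) * (1 / \<mu>) \<le> (norm (x0 - xstar))\<^sup>2 / (2 * \<epsilon>) * (L / \<beta>)"
      using that by (intro mult_left_mono) auto
    then show ?thesis
      by (simp add: field_simps)
  qed
  then show ?thesis
    using alm.F_ys_gap_bound alm.F_ys_tendsto_min[OF xstar_opt] alm.F_ys_gap_le_if_iterations_ge init(2)
    by (meson order_trans)
qed

end
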